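(* Let $(Y,X,A)$ be jointly distributed with $Y,A\in\{0,1\}$, let $R=\mathbb{E}[Y\mid X,A]$ be the Bayes optimal regressor, and let $\ell:\{0,1\}^2\to\mathbb{R}$ be a loss function. Then there exists a predictor derived from $(R,A)$ that satisfies equalized odds and has expected loss $\mathbb{E}\,\ell(\cdot,Y)$ no larger than that of any (possibly randomized) predictor $\widehat{Y}(X,A)\in\{0,1\}$ satisfying equalized odds. The same holds with equalized odds replaced by equal opportunity.
   Context: A predictor $\widehat{Y}\in\{0,1\}$ satisfies equalized odds if $\widehat{Y}$ and $A$ are independent conditional on $Y$, i.e. $\Pr\{\widehat{Y}=1\mid A=0,Y=y\}=\Pr\{\widehat{Y}=1\mid A=1,Y=y\}$ for $y\in\{0,1\}$. It satisfies equal opportunity if $\Pr\{\widehat{Y}=1\mid A=0,Y=1\}=\Pr\{\widehat{Y}=1\mid A=1,Y=1\}$. A predictor is derived from $(R,A)$ if it is a possibly randomized function of $(R,A)$ alone (randomness independent of everything else). *)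

theory Defs
  imports "HOL-Probability.Probability"
begin

text \<open>A (possibly randomized) binary predictor is represented by the function
  pi :: 'a => real giving, at each outcome omega of the underlying probability space,
  the probability that the predictor outputs 1 (True); its internal randomness is
  independent of everything else.  Hence the joint probability that the predictor
  outputs 1 and the event E occurs is the integral of pi over E.\<close>

definition pred_joint :: "'a measure \<Rightarrow> ('a \<Rightarrow> real) \<Rightarrow> ('a \<Rightarrow> bool) \<Rightarrow> real" where
  "pred_joint M \<pi> E = (\<integral>\<omega>. \<pi> \<omega> * indicator {\<omega>\<in>space M. E \<omega>} \<omega> \<partial>M)"

text \<open>Equalized odds: Pr(Yhat=1 | A=0,Y=y) = Pr(Yhat=1 | A=1,Y=y) for y in {0,1},
  written in cross-multiplied form (avoids division by zero-probability events).\<close>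

definition equalized_odds ::
  "'a measure \<Rightarrow> ('a \<Rightarrow> real) \<Rightarrow> ('a \<Rightarrow> bool) \<Rightarrow> ('a \<Rightarrow> bool) \<Rightarrow> bool" where
  "equalized_odds M \<pi> A Y =
    (\<forall>y. pred_joint M \<pi> (\<lambda>\<omega>. A \<omega> = False \<and> Y \<omega> = y) * measure M {\<omega>\<in>space M. A \<omega> = True \<and> Y \<omega> = y}
       = pred_joint M \<pi> (\<lambda>\<omega>. A \<omega> = True \<and> Y \<omega> = y) * measure M {\<omega>\<in>space M. A \<omega> = False \<and> Y \<omega> = y})"

definition equal_opportunity ::
  "'a measure \<Rightarrow> ('a \<Rightarrow> real) \<Rightarrow> ('a \<Rightarrow> bool) \<Rightarrow> ('a \<Rightarrow> bool) \<Rightarrow> bool" where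
  "equal_opportunity M \<pi> A Y =
    (pred_joint M \<pi> (\<lambda>\<omega>. A \<omega> = False \<and> Y \<omega> = True) * measure M {\<omega>\<in>space M. A \<omega> = True \<and> Y \<omega> = True}
       = pred_joint M \<pi> (\<lambda>\<omega>. A \<omega> = True \<and> Y \<omega> = True) * measure M {\<omega>\<in>space M. A \<omega> = False \<and> Y \<omega> = True})"

definition expected_loss ::
  "'a measure \<Rightarrow> ('a \<Rightarrow> real) \<Rightarrow> (bool \<Rightarrow> bool \<Rightarrow> real) \<Rightarrow> ('a \<Rightarrow> bool) \<Rightarrow> real" where
  "expected_loss M \<pi> l Y =
    (\<integral>\<omega>. \<pi> \<omega> * l True (Y \<omega>) + (1 - \<pi> \<omega>) * l False (Y \<omega>) \<partial>M)"

text \<open>Randomized predictor Yhat(X,A): measurable p(x,a) in [0,1] = Pr(Yhat = 1 | X=x, A=a).\<close>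

definition randomized_predictor :: "'x measure \<Rightarrow> ('x \<Rightarrow> bool \<Rightarrow> real) \<Rightarrow> bool" where
  "randomized_predictor MX p =
    ((\<lambda>(x, a). p x a) \<in> borel_measurable (MX \<Otimes>\<^sub>M count_space UNIV) \<and> (\<forall>x a. 0 \<le> p x a \<and> p x a \<le> 1))"

end

theory Submission
  imports Defs
begin

text \<open>
  For a predictor with \<open>Pr(Yhat = 1 | X, A) = \<pi>\<close>, both the fairness constraints and the expected
  loss depend only on the four numbers \<open>Pr(Yhat = 1, A = a)\<close> and \<open>Pr(Yhat = 1, A = a, Y = 1)\<close>,
  and by the tower property the latter equals \<open>E[\<pi> 1{A = a} R]\<close>.  For a fixed first coordinate
  \<open>t\<close>, the Neyman--Pearson lemma shows that the attainable second coordinates form an interval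
  whose endpoints are attained by randomized threshold rules in \<open>R\<close>; mixing the two endpoints
  realises every point in between.  Hence the attainable statistics are the continuous image of a
  compact box of parameters, every point of which is realised by a predictor derived from
  \<open>(R, A)\<close>.  The fairness constraints are closed conditions and the loss is affine in the
  statistics, so a loss minimiser exists on the box, and it beats every fair predictor.
\<close>

lemma (in finite_measure) integrable_bounded_mult:
  fixes f g :: "'a \<Rightarrow> real"
  assumes "integrable M f" "g \<in> borel_measurable M" "\<And>\<omega>. \<bar>g \<omega>\<bar> \<le> 1"
  shows "integrable M (\<lambda>\<omega>. g \<omega> * f \<omega>)"
proof (rule Bochner_Integration.integrable_bound[OF assms(1)])
  show "(\<lambda>\<omega>. g \<omega> * f \<omega>) \<in> borel_measurable M"
    using assms by (auto intro: borel_measurable_integrable)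
  show "AE \<omega> in M. norm (g \<omega> * f \<omega>) \<le> norm (f \<omega>)"
    using assms(3) by (auto simp: abs_mult intro!: mult_left_le_one_le)
qed

lemma (in finite_borel_measure) cdf_crosses_level:
  assumes "0 < s" "s < measure M (space M)"
  obtains \<tau> where "measure M {..<\<tau>} \<le> s" "s \<le> cdf M \<tau>"
proof -
  define T where "T = {x. s \<le> cdf M x}"
  have "\<forall>\<^sub>F x in at_top. s < cdf M x"
    using order_tendstoD(1)[OF cdf_lim_at_top assms(2)] .
  then obtain x0 where "x0 \<in> T" unfolding T_def
    by (metis (mono_tags) eventually_happens' less_le_not_le mem_Collect_eq trivial_limit_at_top_linorder)
  have "\<forall>\<^sub>F x in at_bot. cdf M x < s"
    using order_tendstoD(2)[OF cdf_lim_at_bot assms(1)] .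
  then obtain x1 where x1: "\<And>x. x \<le> x1 \<Longrightarrow> cdf M x < s"
    by (auto simp: eventually_at_bot_linorder)
  have "bdd_below T"
    unfolding T_def bdd_below_def
    by (metis (mono_tags) mem_Collect_eq nle_le not_le x1)
  define \<tau> where "\<tau> = Inf T"
  have "\<forall>\<^sub>F x in at_right \<tau>. s \<le> cdf M x"
  proof (rule eventually_at_right_less[THEN eventually_mono])
    fix x assume "\<tau> < x"
    then obtain y where "y \<in> T" "y < x"
      using cInf_lessD[of T x] \<open>x0 \<in> T\<close> unfolding \<tau>_def by blast
    then show "s \<le> cdf M x"
      using cdf_nondecreasing[of y x] by (auto simp: T_def)
  qed
  then have "s \<le> cdf M \<tau>"
    using cdf_is_right_cont[of \<tau>]
    by (intro tendsto_lowerbound[of "cdf M"]) (auto simp: continuous_within)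
  moreover have "\<forall>\<^sub>F x in at_left \<tau>. cdf M x \<le> s"
  proof (rule eventually_at_leftI[of "\<tau> - 1"])
    fix x assume "x \<in> {\<tau> - 1<..<\<tau>}"
    then have "x < \<tau>" by simp
    then have "x \<notin> T"
      using cInf_lower[OF _ \<open>bdd_below T\<close>] unfolding \<tau>_def by force
    then show "cdf M x \<le> s" by (simp add: T_def)
  qed simp
  then have "measure M {..<\<tau>} \<le> s"
    by (intro tendsto_upperbound[OF cdf_at_left]) auto
  ultimately show thesis using that by blast
qed

lemma (in finite_measure) randomized_threshold_exists:
  fixes \<rho> :: "'a \<Rightarrow> real"
  assumes [measurable]: "\<rho> \<in> borel_measurable M" "S \<in> sets M"
    and "0 < t" "t < measure M S"
  obtains \<tau> \<theta> where "0 \<le> \<theta>" "\<theta> \<le> 1"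
    "measure M {\<omega>\<in>S. \<tau> < \<rho> \<omega>} + \<theta> * measure M {\<omega>\<in>S. \<rho> \<omega> = \<tau>} = t"
proof -
  define N where "N = distr (restrict_space M S) borel \<rho>"
  have measure_N: "measure N B = measure M {\<omega>\<in>S. \<rho> \<omega> \<in> B}" if "B \<in> sets borel" for B
  proof -
    have "{\<omega>\<in>S. \<rho> \<omega> \<in> B} \<in> sets M" using that by measurable
    then show ?thesis
      using that sets.sets_into_space[OF assms(2)]
      by (auto simp: N_def measure_distr measure_restrict_space space_restrict_space
          measurable_restrict_space1 intro!: arg_cong[where f = "measure M"])
  qed
  have "finite_measure (restrict_space M S)"
    using finite_measure_restrict_space[OF finite_measure_axioms] by simp
  then have "finite_measure N"
    unfolding N_def by (rule finite_measure.finite_measure_distr) (simp add: measurable_restrict_space1)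
  then interpret N: finite_borel_measure N
    by (simp add: finite_borel_measure_def finite_borel_measure_axioms_def N_def)
  have "space N = UNIV" by (simp add: N_def)
  with assms(3,4) obtain \<tau> where \<tau>: "measure N {..<\<tau>} \<le> measure M S - t" "measure M S - t \<le> cdf N \<tau>"
    using N.cdf_crosses_level[of "measure M S - t"] measure_N[of UNIV] by auto
  have "measure M S = measure M {\<omega>\<in>S. \<rho> \<omega> \<le> \<tau>} + measure M {\<omega>\<in>S. \<tau> < \<rho> \<omega>}"
    by (subst finite_measure_Union[symmetric]) (auto intro!: arg_cong[where f = "measure M"])
  moreover have "measure M {\<omega>\<in>S. \<rho> \<omega> \<le> \<tau>} = measure M {\<omega>\<in>S. \<rho> \<omega> < \<tau>} + measure M {\<omega>\<in>S. \<rho> \<omega> = \<tau>}"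
    by (subst finite_measure_Union[symmetric]) (auto intro!: arg_cong[where f = "measure M"])
  moreover have "measure N {..<\<tau>} = measure M {\<omega>\<in>S. \<rho> \<omega> < \<tau>}" "cdf N \<tau> = measure M {\<omega>\<in>S. \<rho> \<omega> \<le> \<tau>}"
    by (simp_all add: measure_N cdf_def)
  ultimately have bounds: "measure M {\<omega>\<in>S. \<tau> < \<rho> \<omega>} \<le> t"
    "t \<le> measure M {\<omega>\<in>S. \<tau> < \<rho> \<omega>} + measure M {\<omega>\<in>S. \<rho> \<omega> = \<tau>}"
    using \<tau> by linarith+
  show thesis
  proof (cases "measure M {\<omega>\<in>S. \<rho> \<omega> = \<tau>} = 0")
    case True
    with bounds show ?thesis by (intro that[of 0 \<tau>]) simp_all
  next
    case False
    with bounds show ?thesis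
      by (intro that[of "(t - measure M {\<omega>\<in>S. \<tau> < \<rho> \<omega>}) / measure M {\<omega>\<in>S. \<rho> \<omega> = \<tau>}" \<tau>])
        (simp_all add: divide_simps)
  qed
qed

lemma (in finite_measure) integral_mult_le_threshold_rule:
  fixes \<pi> g \<rho> :: "'a \<Rightarrow> real"
  assumes \<rho>: "integrable M \<rho>" and [measurable]: "\<pi> \<in> borel_measurable M" "g \<in> borel_measurable M"
    and bounded: "\<And>\<omega>. \<bar>\<pi> \<omega>\<bar> \<le> 1" "\<And>\<omega>. \<bar>g \<omega>\<bar> \<le> 1"
    and threshold: "\<And>\<omega>. 0 \<le> (g \<omega> - \<pi> \<omega>) * (\<rho> \<omega> - \<tau>)"
    and mass: "(\<integral>\<omega>. \<pi> \<omega> \<partial>M) = (\<integral>\<omega>. g \<omega> \<partial>M)"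
  shows "(\<integral>\<omega>. \<pi> \<omega> * \<rho> \<omega> \<partial>M) \<le> (\<integral>\<omega>. g \<omega> * \<rho> \<omega> \<partial>M)"
proof -
  have "integrable M \<pi>" "integrable M g"
    using bounded by (auto intro!: integrable_const_bound[where B = 1])
  moreover have "integrable M (\<lambda>\<omega>. \<pi> \<omega> * \<rho> \<omega>)" "integrable M (\<lambda>\<omega>. g \<omega> * \<rho> \<omega>)"
    using bounded by (auto intro!: integrable_bounded_mult \<rho>)
  ultimately have "(\<integral>\<omega>. (g \<omega> - \<pi> \<omega>) * (\<rho> \<omega> - \<tau>) \<partial>M)
      = (\<integral>\<omega>. g \<omega> * \<rho> \<omega> \<partial>M) - (\<integral>\<omega>. \<pi> \<omega> * \<rho> \<omega> \<partial>M) - \<tau> * ((\<integral>\<omega>. g \<omega> \<partial>M) - (\<integral>\<omega>. \<pi> \<omega> \<partial>M))"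
    by (simp add: algebra_simps)
  moreover have "0 \<le> (\<integral>\<omega>. (g \<omega> - \<pi> \<omega>) * (\<rho> \<omega> - \<tau>) \<partial>M)"
    using threshold by (intro integral_nonneg_AE) auto
  ultimately show ?thesis using mass by simp
qed

lemma (in finite_measure) integral_mult_eq_0_if_integral_eq_0:
  fixes \<pi> \<rho> :: "'a \<Rightarrow> real"
  assumes \<rho>: "integrable M \<rho>" and [measurable]: "\<pi> \<in> borel_measurable M"
    and bounded: "\<And>\<omega>. 0 \<le> \<pi> \<omega> \<and> \<pi> \<omega> \<le> 1"
    and "(\<integral>\<omega>. \<pi> \<omega> \<partial>M) = 0"
  shows "(\<integral>\<omega>. \<pi> \<omega> * \<rho> \<omega> \<partial>M) = 0"
proof -
  have [measurable]: "\<rho> \<in> borel_measurable M"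
    using \<rho> by (rule borel_measurable_integrable)
  have "integrable M \<pi>"
    using bounded by (intro integrable_const_bound[where B = 1]) auto
  with assms have "AE \<omega> in M. \<pi> \<omega> = 0"
    by (subst integral_nonneg_eq_0_iff_AE[symmetric]) auto
  then show ?thesis by (subst integral_cong_AE[where g = "\<lambda>_. 0"]) auto
qed

lemma (in finite_measure) threshold_rule_optimal:
  fixes \<rho> :: "'a \<Rightarrow> real"
  assumes [measurable]: "\<rho> \<in> borel_measurable M" "S \<in> sets M" and \<rho>: "integrable M \<rho>"
    and t: "0 < t" "t < measure M S"
  obtains h where "h \<in> borel_measurable borel" "\<And>r. 0 \<le> h r \<and> h r \<le> 1"
    "(\<integral>\<omega>. h (\<rho> \<omega>) * indicator S \<omega> \<partial>M) = t"
    "\<And>\<pi>. \<pi> \<in> borel_measurable M \<Longrightarrow> (\<And>\<omega>. 0 \<le> \<pi> \<omega> \<and> \<pi> \<omega> \<le> 1) \<Longrightarrow>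
      (\<integral>\<omega>. \<pi> \<omega> * indicator S \<omega> \<partial>M) = t \<Longrightarrow>
      (\<integral>\<omega>. \<pi> \<omega> * indicator S \<omega> * \<rho> \<omega> \<partial>M) \<le> (\<integral>\<omega>. h (\<rho> \<omega>) * indicator S \<omega> * \<rho> \<omega> \<partial>M)"
proof -
  obtain \<tau> \<theta> where \<theta>: "0 \<le> \<theta>" "\<theta> \<le> 1"
    and mass: "measure M {\<omega>\<in>S. \<tau> < \<rho> \<omega>} + \<theta> * measure M {\<omega>\<in>S. \<rho> \<omega> = \<tau>} = t"
    by (rule randomized_threshold_exists[of \<rho> S t]) (use t in simp_all)
  define h where "h r = (if \<tau> < r then 1 else if r = \<tau> then \<theta> else 0)" for r :: real
  have [measurable]: "h \<in> borel_measurable borel" unfolding h_def by measurable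
  have h: "0 \<le> h r \<and> h r \<le> 1" for r using \<theta> by (auto simp: h_def)
  have "(\<integral>\<omega>. h (\<rho> \<omega>) * indicator S \<omega> \<partial>M) =
      (\<integral>\<omega>. indicator {\<omega>\<in>S. \<tau> < \<rho> \<omega>} \<omega> + \<theta> * indicator {\<omega>\<in>S. \<rho> \<omega> = \<tau>} \<omega> \<partial>M)"
    by (intro Bochner_Integration.integral_cong) (auto simp: h_def indicator_def)
  also have "\<dots> = t"
    using mass by (subst Bochner_Integration.integral_add)
      (auto intro!: integrable_const_bound[where B = 1])
  finally have h_mass: "(\<integral>\<omega>. h (\<rho> \<omega>) * indicator S \<omega> \<partial>M) = t" .
  show thesis
  proof (rule that[OF _ h h_mass])
    fix \<pi> :: "'a \<Rightarrow> real"
    assume [measurable]: "\<pi> \<in> borel_measurable M" and \<pi>: "\<And>\<omega>. 0 \<le> \<pi> \<omega> \<and> \<pi> \<omega> \<le> 1"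
      and "(\<integral>\<omega>. \<pi> \<omega> * indicator S \<omega> \<partial>M) = t"
    have "0 \<le> (h r - p) * (r - \<tau>)" if "0 \<le> p" "p \<le> 1" for r p
      using that \<theta> by (auto simp: h_def mult_nonneg_nonpos)
    with \<pi> have "0 \<le> (h (\<rho> \<omega>) * indicator S \<omega> - \<pi> \<omega> * indicator S \<omega>) * (\<rho> \<omega> - \<tau>)" for \<omega>
      by (cases "\<omega> \<in> S") auto
    with h_mass show "(\<integral>\<omega>. \<pi> \<omega> * indicator S \<omega> * \<rho> \<omega> \<partial>M) \<le> (\<integral>\<omega>. h (\<rho> \<omega>) * indicator S \<omega> * \<rho> \<omega> \<partial>M)"
      using h \<pi> \<open>(\<integral>\<omega>. \<pi> \<omega> * indicator S \<omega> \<partial>M) = t\<close>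
      by (intro integral_mult_le_threshold_rule[where \<tau> = \<tau>] \<rho>) (auto simp: indicator_def abs_le_iff)
  qed measurable
qed

lemma (in finite_measure) neyman_pearson_rule_exists:
  fixes \<rho> :: "'a \<Rightarrow> real"
  assumes [measurable]: "\<rho> \<in> borel_measurable M" "S \<in> sets M" and \<rho>: "integrable M \<rho>"
    and t: "0 \<le> t" "t \<le> measure M S"
  obtains h where "h \<in> borel_measurable borel" "\<And>r. 0 \<le> h r \<and> h r \<le> 1"
    "(\<integral>\<omega>. h (\<rho> \<omega>) * indicator S \<omega> \<partial>M) = t"
    "\<And>\<pi>. \<pi> \<in> borel_measurable M \<Longrightarrow> (\<And>\<omega>. 0 \<le> \<pi> \<omega> \<and> \<pi> \<omega> \<le> 1) \<Longrightarrow>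
      (\<integral>\<omega>. \<pi> \<omega> * indicator S \<omega> \<partial>M) = t \<Longrightarrow>
      (\<integral>\<omega>. \<pi> \<omega> * indicator S \<omega> * \<rho> \<omega> \<partial>M) \<le> (\<integral>\<omega>. h (\<rho> \<omega>) * indicator S \<omega> * \<rho> \<omega> \<partial>M)"
proof -
  consider "t = 0" | "t = measure M S" | "0 < t" "t < measure M S"
    using t by linarith
  then show thesis
  proof cases
    case 1
    show thesis
    proof (rule that[of "\<lambda>_. 0"])
      fix \<pi> :: "'a \<Rightarrow> real"
      assume [measurable]: "\<pi> \<in> borel_measurable M" and "\<And>\<omega>. 0 \<le> \<pi> \<omega> \<and> \<pi> \<omega> \<le> 1"
        and "(\<integral>\<omega>. \<pi> \<omega> * indicator S \<omega> \<partial>M) = t"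
      with 1 have "(\<integral>\<omega>. \<pi> \<omega> * indicator S \<omega> * \<rho> \<omega> \<partial>M) = 0"
        by (intro integral_mult_eq_0_if_integral_eq_0[where \<pi> = "\<lambda>\<omega>. \<pi> \<omega> * indicator S \<omega>"] \<rho>)
          (auto simp: indicator_def)
      then show "(\<integral>\<omega>. \<pi> \<omega> * indicator S \<omega> * \<rho> \<omega> \<partial>M) \<le> (\<integral>\<omega>. 0 * indicator S \<omega> * \<rho> \<omega> \<partial>M)"
        by simp
    qed (use 1 in auto)
  next
    case 2
    show thesis
    proof (rule that[of "\<lambda>_. 1"])
      fix \<pi> :: "'a \<Rightarrow> real"
      assume [measurable]: "\<pi> \<in> borel_measurable M" and \<pi>: "\<And>\<omega>. 0 \<le> \<pi> \<omega> \<and> \<pi> \<omega> \<le> 1"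
        and mass: "(\<integral>\<omega>. \<pi> \<omega> * indicator S \<omega> \<partial>M) = t"
      have "integrable M (\<lambda>\<omega>. \<pi> \<omega> * indicator S \<omega>)"
        using \<pi> by (intro integrable_const_bound[where B = 1]) (auto simp: indicator_def)
      moreover have "integrable M (indicator S :: 'a \<Rightarrow> real)"
        by (intro integrable_const_bound[where B = 1]) auto
      ultimately have "(\<integral>\<omega>. (1 - \<pi> \<omega>) * indicator S \<omega> \<partial>M) = 0"
        using 2 mass by (simp add: left_diff_distrib)
      then have "(\<integral>\<omega>. (1 - \<pi> \<omega>) * indicator S \<omega> * \<rho> \<omega> \<partial>M) = 0"
        using \<pi>
        by (intro integral_mult_eq_0_if_integral_eq_0[where \<pi> = "\<lambda>\<omega>. (1 - \<pi> \<omega>) * indicator S \<omega>"] \<rho>)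
          (auto simp: indicator_def)
      moreover have "integrable M (\<lambda>\<omega>. \<pi> \<omega> * indicator S \<omega> * \<rho> \<omega>)" "integrable M (\<lambda>\<omega>. indicator S \<omega> * \<rho> \<omega>)"
        using \<pi> by (auto intro!: integrable_bounded_mult \<rho> simp: indicator_def)
      ultimately show "(\<integral>\<omega>. \<pi> \<omega> * indicator S \<omega> * \<rho> \<omega> \<partial>M) \<le> (\<integral>\<omega>. 1 * indicator S \<omega> * \<rho> \<omega> \<partial>M)"
        by (simp add: left_diff_distrib)
    qed (use 2 in auto)
  next
    case 3
    with threshold_rule_optimal[OF assms(1-3)] that show thesis by blast
  qed
qed

locale fair_classification = prob_space M for M :: "'a measure" +
  fixes MX :: "'x measure" and X :: "'a \<Rightarrow> 'x" and Y A :: "'a \<Rightarrow> bool" and R :: "'a \<Rightarrow> real"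
  assumes X_measurable[measurable]: "X \<in> measurable M MX"
    and Y_measurable[measurable]: "Y \<in> measurable M (count_space UNIV)"
    and A_measurable[measurable]: "A \<in> measurable M (count_space UNIV)"
    and R_def: "R = real_cond_exp M
               (vimage_algebra (space M) (\<lambda>\<omega>. (X \<omega>, A \<omega>)) (MX \<Otimes>\<^sub>M count_space UNIV))
               (\<lambda>\<omega>. if Y \<omega> then 1 else 0)"
begin

definition F :: "'a measure" where
  "F = vimage_algebra (space M) (\<lambda>\<omega>. (X \<omega>, A \<omega>)) (MX \<Otimes>\<^sub>M count_space UNIV)"

definition Y_ind :: "'a \<Rightarrow> real" where
  "Y_ind \<omega> = (if Y \<omega> then 1 else 0)"

lemma Y_ind_measurable[measurable]: "Y_ind \<in> borel_measurable M"
  unfolding Y_ind_def by measurable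

lemma XA_measurable: "(\<lambda>\<omega>. (X \<omega>, A \<omega>)) \<in> measurable M (MX \<Otimes>\<^sub>M count_space UNIV)"
  by measurable

lemma XA_measurable_F: "(\<lambda>\<omega>. (X \<omega>, A \<omega>)) \<in> measurable F (MX \<Otimes>\<^sub>M count_space UNIV)"
  unfolding F_def by (rule measurable_vimage_algebra1) (use measurable_space[OF XA_measurable] in auto)

lemma A_measurable_F[measurable]: "A \<in> measurable F (count_space UNIV)"
  using measurable_compose[OF XA_measurable_F measurable_snd] by simp

lemma subalgebra_F: "subalgebra M F"
proof -
  have "sets F \<subseteq> sets M"
    using measurable_sets[OF XA_measurable] measurable_space[OF XA_measurable]
    by (auto simp: F_def sets_vimage_algebra2)
  then show ?thesis
    by (simp add: subalgebra_def F_def)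
qed

interpretation F: sigma_finite_subalgebra M F
  by (intro finite_measure_subalgebra_is_sigma_finite) (unfold_locales, rule subalgebra_F)

lemma R_measurable_F[measurable]: "R \<in> borel_measurable F"
  unfolding R_def F_def[symmetric] by simp

lemma R_measurable[measurable]: "R \<in> borel_measurable M"
  using measurable_from_subalg[OF subalgebra_F R_measurable_F] .

lemma integrable_R: "integrable M R"
  unfolding R_def F_def[symmetric] Y_ind_def[symmetric]
  by (intro F.real_cond_exp_int(1) integrable_const_bound[where B = 1]) (auto simp: Y_ind_def)

lemma integral_mult_R:
  assumes [measurable]: "g \<in> borel_measurable F" and "\<And>\<omega>. \<bar>g \<omega>\<bar> \<le> 1"
  shows "(\<integral>\<omega>. g \<omega> * R \<omega> \<partial>M) = (\<integral>\<omega>. g \<omega> * Y_ind \<omega> \<partial>M)"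
proof -
  have [measurable]: "g \<in> borel_measurable M"
    by (rule measurable_from_subalg[OF subalgebra_F assms(1)])
  have "integrable M (\<lambda>\<omega>. g \<omega> * Y_ind \<omega>)"
    using assms(2) by (intro integrable_const_bound[where B = 1]) (auto simp: Y_ind_def abs_mult)
  then show ?thesis
    unfolding R_def F_def[symmetric] Y_ind_def[symmetric]
    using F.real_cond_exp_intg(2)[OF _ assms(1) Y_ind_measurable] by blast
qed

definition predictors :: "('a \<Rightarrow> real) set" where
  "predictors = {\<pi>. \<pi> \<in> borel_measurable F \<and> (\<forall>\<omega>. 0 \<le> \<pi> \<omega> \<and> \<pi> \<omega> \<le> 1)}"

lemma predictorsD:
  assumes "\<pi> \<in> predictors"
  shows "\<pi> \<in> borel_measurable F" "\<pi> \<in> borel_measurable M" "0 \<le> \<pi> \<omega>" "\<pi> \<omega> \<le> 1"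
proof -
  show F_meas: "\<pi> \<in> borel_measurable F" using assms by (simp add: predictors_def)
  show "\<pi> \<in> borel_measurable M" by (rule measurable_from_subalg[OF subalgebra_F F_meas])
qed (use assms in \<open>simp_all add: predictors_def\<close>)

lemma predictors_convex:
  "\<pi> \<in> predictors \<Longrightarrow> \<pi>' \<in> predictors \<Longrightarrow> 0 \<le> c \<Longrightarrow> c \<le> 1 \<Longrightarrow>
    (\<lambda>\<omega>. c * \<pi> \<omega> + (1 - c) * \<pi>' \<omega>) \<in> predictors"
  by (auto simp: predictors_def intro!: convex_bound_le)

lemma const_in_predictors: "0 \<le> c \<Longrightarrow> c \<le> 1 \<Longrightarrow> (\<lambda>_. c) \<in> predictors"
  by (simp add: predictors_def)

lemma complement_in_predictors: "\<pi> \<in> predictors \<Longrightarrow> (\<lambda>\<omega>. 1 - \<pi> \<omega>) \<in> predictors"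
  by (auto simp: predictors_def)

lemma rule_in_predictors:
  "h \<in> borel_measurable borel \<Longrightarrow> (\<And>r. 0 \<le> h r \<and> h r \<le> 1) \<Longrightarrow> (\<lambda>\<omega>. h (R \<omega>)) \<in> predictors"
  by (simp add: predictors_def)

definition group :: "bool \<Rightarrow> 'a set" where
  "group a = {\<omega>\<in>space M. A \<omega> = a}"

definition group_prob :: "bool \<Rightarrow> real" where
  "group_prob a = measure M (group a)"

lemma group_sets_F[measurable]: "group a \<in> sets F"
proof -
  have "group a = {\<omega>\<in>space F. A \<omega> = a}"
    using subalgebra_F by (simp add: group_def subalgebra_def)
  also have "\<dots> \<in> sets F" by measurable
  finally show ?thesis .
qed

lemma group_sets[measurable]: "group a \<in> sets M"
  using subalgebra_F group_sets_F by (auto simp: subalgebra_def)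

text \<open>
  \<open>pos a \<pi>\<close> is \<open>Pr(Yhat = 1, A = a)\<close>; by \<open>true_pos_eq_Y\<close>, \<open>true_pos a \<pi>\<close> is
  \<open>Pr(Yhat = 1, A = a, Y = 1)\<close>.
\<close>

definition pos :: "bool \<Rightarrow> ('a \<Rightarrow> real) \<Rightarrow> real" where
  "pos a \<pi> = (\<integral>\<omega>. \<pi> \<omega> * indicator (group a) \<omega> \<partial>M)"

definition true_pos :: "bool \<Rightarrow> ('a \<Rightarrow> real) \<Rightarrow> real" where
  "true_pos a \<pi> = (\<integral>\<omega>. \<pi> \<omega> * indicator (group a) \<omega> * R \<omega> \<partial>M)"

lemma integrable_pos_true_pos:
  assumes "\<pi> \<in> predictors"
  shows "integrable M (\<lambda>\<omega>. \<pi> \<omega> * indicator (group a) \<omega>)"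
    "integrable M (\<lambda>\<omega>. \<pi> \<omega> * indicator (group a) \<omega> * R \<omega>)"
proof -
  have [measurable]: "\<pi> \<in> borel_measurable M" and bounded: "\<bar>\<pi> \<omega> * indicator (group a) \<omega>\<bar> \<le> 1" for \<omega>
    using predictorsD[OF assms] by (auto simp: indicator_def)
  show "integrable M (\<lambda>\<omega>. \<pi> \<omega> * indicator (group a) \<omega>)"
    using bounded by (intro integrable_const_bound[where B = 1]) auto
  show "integrable M (\<lambda>\<omega>. \<pi> \<omega> * indicator (group a) \<omega> * R \<omega>)"
    using bounded by (intro integrable_bounded_mult integrable_R) auto
qed

lemma pos_lincomb:
  "\<pi> \<in> predictors \<Longrightarrow> \<pi>' \<in> predictors \<Longrightarrow>
    pos a (\<lambda>\<omega>. c * \<pi> \<omega> + d * \<pi>' \<omega>) = c * pos a \<pi> + d * pos a \<pi>'"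
  using integrable_pos_true_pos(1)[of \<pi> a] integrable_pos_true_pos(1)[of \<pi>' a]
  by (simp add: pos_def distrib_right mult.assoc)

lemma true_pos_lincomb:
  "\<pi> \<in> predictors \<Longrightarrow> \<pi>' \<in> predictors \<Longrightarrow>
    true_pos a (\<lambda>\<omega>. c * \<pi> \<omega> + d * \<pi>' \<omega>) = c * true_pos a \<pi> + d * true_pos a \<pi>'"
  using integrable_pos_true_pos(2)[of \<pi> a] integrable_pos_true_pos(2)[of \<pi>' a]
  by (simp add: true_pos_def distrib_right mult.assoc)

lemma pos_zero[simp]: "pos a (\<lambda>_. 0) = 0" and true_pos_zero[simp]: "true_pos a (\<lambda>_. 0) = 0"
  by (simp_all add: pos_def true_pos_def)

lemma pos_one: "pos a (\<lambda>_. 1) = group_prob a"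
  by (simp add: pos_def group_prob_def)

lemma true_pos_eq_Y:
  assumes "\<pi> \<in> predictors"
  shows "true_pos a \<pi> = (\<integral>\<omega>. \<pi> \<omega> * indicator (group a) \<omega> * Y_ind \<omega> \<partial>M)"
  using predictorsD[OF assms] unfolding true_pos_def
  by (intro integral_mult_R) (auto simp: indicator_def)

lemma true_pos_bounds:
  assumes "\<pi> \<in> predictors"
  shows "0 \<le> true_pos a \<pi>" "true_pos a \<pi> \<le> pos a \<pi>"
proof -
  have [measurable]: "\<pi> \<in> borel_measurable M" and \<pi>: "0 \<le> \<pi> \<omega>" "\<pi> \<omega> \<le> 1" for \<omega>
    using predictorsD[OF assms] by auto
  show "0 \<le> true_pos a \<pi>"
    unfolding true_pos_eq_Y[OF assms] using \<pi> by (intro integral_nonneg_AE) (auto simp: Y_ind_def)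
  show "true_pos a \<pi> \<le> pos a \<pi>"
  proof (unfold true_pos_eq_Y[OF assms] pos_def, rule integral_mono)
    show "integrable M (\<lambda>\<omega>. \<pi> \<omega> * indicator (group a) \<omega> * Y_ind \<omega>)"
      using \<pi> by (intro integrable_const_bound[where B = 1]) (auto simp: Y_ind_def indicator_def)
  qed (use \<pi> integrable_pos_true_pos(1)[OF assms] in \<open>auto simp: Y_ind_def indicator_def\<close>)
qed

lemma pos_bounds:
  assumes "\<pi> \<in> predictors"
  shows "0 \<le> pos a \<pi>" "pos a \<pi> \<le> group_prob a"
proof -
  have [measurable]: "\<pi> \<in> borel_measurable M" and \<pi>: "0 \<le> \<pi> \<omega>" "\<pi> \<omega> \<le> 1" for \<omega>
    using predictorsD[OF assms] by auto
  show "0 \<le> pos a \<pi>"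
    unfolding pos_def using \<pi> by (intro integral_nonneg_AE) auto
  show "pos a \<pi> \<le> group_prob a"
  proof -
    have "pos a \<pi> \<le> (\<integral>\<omega>. indicator (group a) \<omega> \<partial>M)"
      unfolding pos_def using \<pi>
      by (intro integral_mono integrable_pos_true_pos(1)[OF assms] integrable_real_indicator)
        (auto simp: indicator_def less_top[symmetric])
    then show ?thesis by (simp add: group_prob_def)
  qed
qed

text \<open>Hilbert choice of a Neyman--Pearson rule; unspecified unless \<open>0 \<le> t \<le> group_prob a\<close>.\<close>

definition np_rule :: "bool \<Rightarrow> real \<Rightarrow> real \<Rightarrow> real" where
  "np_rule a t = (SOME h. h \<in> borel_measurable borel \<and> (\<forall>r. 0 \<le> h r \<and> h r \<le> 1) \<and>
     pos a (\<lambda>\<omega>. h (R \<omega>)) = t \<and>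
     (\<forall>\<pi>\<in>predictors. pos a \<pi> = t \<longrightarrow> true_pos a \<pi> \<le> true_pos a (\<lambda>\<omega>. h (R \<omega>))))"

lemma np_rule:
  assumes "0 \<le> t" "t \<le> group_prob a"
  shows np_rule_measurable: "np_rule a t \<in> borel_measurable borel"
    and np_rule_bounds: "0 \<le> np_rule a t r" "np_rule a t r \<le> 1"
    and pos_np_rule: "pos a (\<lambda>\<omega>. np_rule a t (R \<omega>)) = t"
    and true_pos_le_np_rule:
      "\<And>\<pi>. \<pi> \<in> predictors \<Longrightarrow> pos a \<pi> = t \<Longrightarrow> true_pos a \<pi> \<le> true_pos a (\<lambda>\<omega>. np_rule a t (R \<omega>))"
proof -
  obtain h where "h \<in> borel_measurable borel" "\<And>r. 0 \<le> h r \<and> h r \<le> 1"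
    "pos a (\<lambda>\<omega>. h (R \<omega>)) = t"
    "\<And>\<pi>. \<pi> \<in> borel_measurable M \<Longrightarrow> (\<And>\<omega>. 0 \<le> \<pi> \<omega> \<and> \<pi> \<omega> \<le> 1) \<Longrightarrow> pos a \<pi> = t \<Longrightarrow>
      true_pos a \<pi> \<le> true_pos a (\<lambda>\<omega>. h (R \<omega>))"
    unfolding pos_def true_pos_def
    by (rule neyman_pearson_rule_exists[OF R_measurable group_sets integrable_R])
      (use assms in \<open>auto simp: group_prob_def\<close>)
  then have "\<exists>h. h \<in> borel_measurable borel \<and> (\<forall>r. 0 \<le> h r \<and> h r \<le> 1) \<and>
     pos a (\<lambda>\<omega>. h (R \<omega>)) = t \<and>
     (\<forall>\<pi>\<in>predictors. pos a \<pi> = t \<longrightarrow> true_pos a \<pi> \<le> true_pos a (\<lambda>\<omega>. h (R \<omega>)))"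
    using predictorsD by blast
  from someI_ex[OF this] show "np_rule a t \<in> borel_measurable borel" "0 \<le> np_rule a t r" "np_rule a t r \<le> 1"
    "pos a (\<lambda>\<omega>. np_rule a t (R \<omega>)) = t"
    "\<And>\<pi>. \<pi> \<in> predictors \<Longrightarrow> pos a \<pi> = t \<Longrightarrow> true_pos a \<pi> \<le> true_pos a (\<lambda>\<omega>. np_rule a t (R \<omega>))"
    unfolding np_rule_def by auto
qed

lemma np_rule_in_predictors: "0 \<le> t \<Longrightarrow> t \<le> group_prob a \<Longrightarrow> (\<lambda>\<omega>. np_rule a t (R \<omega>)) \<in> predictors"
  using np_rule_bounds by (intro rule_in_predictors np_rule_measurable) auto

definition tp_max :: "bool \<Rightarrow> real \<Rightarrow> real" where
  "tp_max a t = true_pos a (\<lambda>\<omega>. np_rule a t (R \<omega>))"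

lemma true_pos_le_tp_max: "\<pi> \<in> predictors \<Longrightarrow> true_pos a \<pi> \<le> tp_max a (pos a \<pi>)"
  unfolding tp_max_def by (intro true_pos_le_np_rule pos_bounds) auto

lemma tp_max_bounds: "0 \<le> t \<Longrightarrow> t \<le> group_prob a \<Longrightarrow> 0 \<le> tp_max a t \<and> tp_max a t \<le> t"
  using true_pos_bounds[OF np_rule_in_predictors, of t a a] pos_np_rule[of t a] by (simp add: tp_max_def)

lemma tp_max_mono:
  assumes "0 \<le> t" "t \<le> t'" "t' \<le> group_prob a"
  shows "tp_max a t \<le> tp_max a t'"
proof (cases "t = group_prob a")
  case False
  define c where "c = (t' - t) / (group_prob a - t)"
  have c: "0 \<le> c" "c \<le> 1" "c * (group_prob a - t) = t' - t"
    using assms False by (auto simp: c_def divide_simps)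
  define h where "h = (\<lambda>\<omega>. np_rule a t (R \<omega>))"
  have h: "h \<in> predictors" using assms unfolding h_def by (intro np_rule_in_predictors) auto
  define \<pi> where "\<pi> = (\<lambda>\<omega>. c * 1 + (1 - c) * h \<omega>)"
  have \<pi>: "\<pi> \<in> predictors"
    unfolding \<pi>_def using c by (intro predictors_convex const_in_predictors h) auto
  have "pos a \<pi> = c * group_prob a + (1 - c) * t"
    using pos_lincomb[OF const_in_predictors[of 1] h, of a c "1 - c"] pos_np_rule[of t a] assms
    by (simp add: \<pi>_def pos_one h_def)
  also have "\<dots> = t'" using c by (simp add: algebra_simps)
  finally have "pos a \<pi> = t'" .
  have "true_pos a h \<le> true_pos a (\<lambda>_. 1)"
    using true_pos_bounds(1)[OF complement_in_predictors[OF h], of a]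
      true_pos_lincomb[OF const_in_predictors h, of 1 a 1 "-1"] by simp
  moreover have "true_pos a \<pi> = true_pos a h + c * (true_pos a (\<lambda>_. 1) - true_pos a h)"
    using true_pos_lincomb[OF const_in_predictors h, of 1 a c "1 - c"]
    by (simp add: \<pi>_def algebra_simps)
  ultimately have "tp_max a t \<le> true_pos a \<pi>"
    using c by (simp add: tp_max_def h_def)
  also have "\<dots> \<le> tp_max a t'"
    using true_pos_le_tp_max[OF \<pi>, of a] \<open>pos a \<pi> = t'\<close> by simp
  finally show ?thesis .
qed (use assms in simp)

text \<open>Scaling the optimal rule for \<open>t'\<close> by \<open>t / t'\<close> gives a rule of mass \<open>t\<close>.\<close>

lemma tp_max_lipschitz:
  assumes "0 \<le> t" "t \<le> t'" "t' \<le> group_prob a"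
  shows "tp_max a t' - tp_max a t \<le> t' - t"
proof (cases "t' = 0")
  case False
  then have "0 < t'" using assms by simp
  define h where "h = (\<lambda>\<omega>. np_rule a t' (R \<omega>))"
  have h: "h \<in> predictors" using assms unfolding h_def by (intro np_rule_in_predictors) auto
  define \<pi> where "\<pi> = (\<lambda>\<omega>. (t / t') * h \<omega> + (1 - t / t') * 0)"
  have \<pi>: "\<pi> \<in> predictors"
    unfolding \<pi>_def using assms \<open>0 < t'\<close> by (intro predictors_convex const_in_predictors h) auto
  have "pos a \<pi> = t"
    using pos_lincomb[OF h const_in_predictors, of 0 a "t / t'" "1 - t / t'"] pos_np_rule[of t' a] assms \<open>0 < t'\<close>
    by (simp add: \<pi>_def h_def)
  moreover have "true_pos a \<pi> = (t / t') * tp_max a t'"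
    using true_pos_lincomb[OF h const_in_predictors, of 0 a "t / t'" "1 - t / t'"]
    by (simp add: \<pi>_def h_def tp_max_def)
  ultimately have "(t / t') * tp_max a t' \<le> tp_max a t"
    using true_pos_le_tp_max[OF \<pi>, of a] by simp
  then have "tp_max a t' - tp_max a t \<le> (1 - t / t') * tp_max a t'"
    by (simp add: algebra_simps)
  also have "\<dots> \<le> (1 - t / t') * t'"
    using tp_max_bounds[of t' a] assms \<open>0 < t'\<close> by (intro mult_left_mono) auto
  also have "\<dots> = t' - t" using \<open>0 < t'\<close> by (simp add: field_simps)
  finally show ?thesis .
qed (use assms in simp)

lemma continuous_on_tp_max: "continuous_on {0..group_prob a} (tp_max a)"
proof (rule lipschitz_on_continuous_on[of 1], rule lipschitz_onI)
  fix x y assume "x \<in> {0..group_prob a}" "y \<in> {0..group_prob a}"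
  then show "dist (tp_max a x) (tp_max a y) \<le> 1 * dist x y"
    using tp_max_mono[of x y a] tp_max_lipschitz[of x y a] tp_max_mono[of y x a] tp_max_lipschitz[of y x a]
    by (cases "x \<le> y") (auto simp: dist_real_def)
qed simp

text \<open>
  The least true-positive mass at positive mass \<open>t\<close> is attained by the complement of the
  optimal rule for positive mass \<open>group_prob a - t\<close>.
\<close>

definition min_rule :: "bool \<Rightarrow> real \<Rightarrow> real \<Rightarrow> real" where
  "min_rule a t r = 1 - np_rule a (group_prob a - t) r"

definition tp_min :: "bool \<Rightarrow> real \<Rightarrow> real" where
  "tp_min a t = true_pos a (\<lambda>_. 1) - tp_max a (group_prob a - t)"

lemma min_rule_in_predictors:
  "0 \<le> t \<Longrightarrow> t \<le> group_prob a \<Longrightarrow> (\<lambda>\<omega>. min_rule a t (R \<omega>)) \<in> predictors"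
  unfolding min_rule_def by (intro complement_in_predictors np_rule_in_predictors) auto

lemma pos_complement: "\<pi> \<in> predictors \<Longrightarrow> pos a (\<lambda>\<omega>. 1 - \<pi> \<omega>) = group_prob a - pos a \<pi>"
  using pos_lincomb[OF const_in_predictors[of 1], of \<pi> a 1 "-1"] by (simp add: pos_one)

lemma true_pos_complement:
  "\<pi> \<in> predictors \<Longrightarrow> true_pos a (\<lambda>\<omega>. 1 - \<pi> \<omega>) = true_pos a (\<lambda>_. 1) - true_pos a \<pi>"
  using true_pos_lincomb[OF const_in_predictors[of 1], of \<pi> a 1 "-1"] by simp

lemma pos_min_rule: "0 \<le> t \<Longrightarrow> t \<le> group_prob a \<Longrightarrow> pos a (\<lambda>\<omega>. min_rule a t (R \<omega>)) = t"
  unfolding min_rule_def by (subst pos_complement) (auto intro: np_rule_in_predictors simp: pos_np_rule)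

lemma true_pos_min_rule:
  "0 \<le> t \<Longrightarrow> t \<le> group_prob a \<Longrightarrow> true_pos a (\<lambda>\<omega>. min_rule a t (R \<omega>)) = tp_min a t"
  unfolding min_rule_def tp_min_def tp_max_def
  by (subst true_pos_complement) (auto intro: np_rule_in_predictors)

lemma tp_min_le_true_pos: "\<pi> \<in> predictors \<Longrightarrow> tp_min a (pos a \<pi>) \<le> true_pos a \<pi>"
  using true_pos_le_tp_max[OF complement_in_predictors, of \<pi> a]
  by (simp add: tp_min_def pos_complement true_pos_complement)

lemma continuous_on_tp_min: "continuous_on {0..group_prob a} (tp_min a)"
  unfolding tp_min_def
  by (intro continuous_intros continuous_on_compose2[OF continuous_on_tp_max]) auto

fun mix_rule :: "bool \<Rightarrow> real \<times> real \<Rightarrow> real \<Rightarrow> real" where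
  "mix_rule a (t, s) r = s * np_rule a t r + (1 - s) * min_rule a t r"

definition param_box :: "bool \<Rightarrow> (real \<times> real) set" where
  "param_box a = {0..group_prob a} \<times> {0..1}"

fun param_stats :: "bool \<Rightarrow> real \<times> real \<Rightarrow> real \<times> real" where
  "param_stats a (t, s) = (t, s * tp_max a t + (1 - s) * tp_min a t)"

definition group_stats :: "bool \<Rightarrow> ('a \<Rightarrow> real) \<Rightarrow> real \<times> real" where
  "group_stats a \<pi> = (pos a \<pi>, true_pos a \<pi>)"

lemma mix_rule_measurable: "z \<in> param_box a \<Longrightarrow> mix_rule a z \<in> borel_measurable borel"
proof (cases z)
  case (Pair t s)
  assume "z \<in> param_box a"
  then have [measurable]: "np_rule a t \<in> borel_measurable borel" "np_rule a (group_prob a - t) \<in> borel_measurable borel"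
    using Pair by (auto simp: param_box_def intro: np_rule_measurable)
  have "mix_rule a z = (\<lambda>r. s * np_rule a t r + (1 - s) * (1 - np_rule a (group_prob a - t) r))"
    by (simp add: Pair min_rule_def fun_eq_iff)
  then show ?thesis by simp
qed

lemma mix_rule_bounds: "z \<in> param_box a \<Longrightarrow> 0 \<le> mix_rule a z r \<and> mix_rule a z r \<le> 1"
  using np_rule_bounds[of "fst z" a r] np_rule_bounds[of "group_prob a - fst z" a r]
  by (cases z) (auto simp: param_box_def min_rule_def intro!: convex_bound_le)

lemma mix_rule_in_predictors: "z \<in> param_box a \<Longrightarrow> (\<lambda>\<omega>. mix_rule a z (R \<omega>)) \<in> predictors"
  using mix_rule_bounds by (intro rule_in_predictors mix_rule_measurable) auto

lemma group_stats_mix_rule: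
  assumes "z \<in> param_box a"
  shows "group_stats a (\<lambda>\<omega>. mix_rule a z (R \<omega>)) = param_stats a z"
proof (cases z)
  case (Pair t s)
  with assms have t: "0 \<le> t" "t \<le> group_prob a" by (auto simp: param_box_def)
  note rules = np_rule_in_predictors[OF t] min_rule_in_predictors[OF t]
  show ?thesis
    using pos_lincomb[OF rules, of a s "1 - s"] true_pos_lincomb[OF rules, of a s "1 - s"]
    by (simp add: Pair group_stats_def pos_np_rule[OF t] pos_min_rule[OF t] true_pos_min_rule[OF t]
        tp_max_def algebra_simps)
qed

lemma group_stats_in_param_image:
  assumes "\<pi> \<in> predictors"
  shows "group_stats a \<pi> \<in> param_stats a ` param_box a"
proof -
  have "true_pos a \<pi> \<in> closed_segment (tp_min a (pos a \<pi>)) (tp_max a (pos a \<pi>))"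
    using tp_min_le_true_pos[OF assms, of a] true_pos_le_tp_max[OF assms, of a]
    by (auto simp: closed_segment_eq_real_ivl)
  then obtain s where s: "0 \<le> s" "s \<le> 1"
    and "true_pos a \<pi> = s * tp_max a (pos a \<pi>) + (1 - s) * tp_min a (pos a \<pi>)"
    by (auto simp: closed_segment_def algebra_simps)
  then have "group_stats a \<pi> = param_stats a (pos a \<pi>, s)"
    by (simp add: group_stats_def)
  moreover have "(pos a \<pi>, s) \<in> param_box a"
    using pos_bounds[OF assms] s by (simp add: param_box_def)
  ultimately show ?thesis by blast
qed

lemma continuous_on_param_stats: "continuous_on (param_box a) (param_stats a)"
proof -
  have "continuous_on (param_box a) (\<lambda>z. (fst z, snd z * tp_max a (fst z) + (1 - snd z) * tp_min a (fst z)))"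
    unfolding param_box_def
    by (intro continuous_intros continuous_on_compose2[OF continuous_on_tp_max]
        continuous_on_compose2[OF continuous_on_tp_min]) auto
  moreover have "param_stats a = (\<lambda>z. (fst z, snd z * tp_max a (fst z) + (1 - snd z) * tp_min a (fst z)))"
    by (auto simp: fun_eq_iff)
  ultimately show ?thesis by simp
qed

lemma compact_param_box: "compact (param_box a)"
  unfolding param_box_def by (intro compact_Times compact_Icc)

definition stats :: "('a \<Rightarrow> real) \<Rightarrow> (real \<times> real) \<times> (real \<times> real)" where
  "stats \<pi> = (group_stats False \<pi>, group_stats True \<pi>)"

definition param_space :: "((real \<times> real) \<times> (real \<times> real)) set" where
  "param_space = param_box False \<times> param_box True"

definition stats_of_param :: "(real \<times> real) \<times> (real \<times> real) \<Rightarrow> (real \<times> real) \<times> (real \<times> real)" where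
  "stats_of_param z = (param_stats False (fst z), param_stats True (snd z))"

definition param_rule :: "(real \<times> real) \<times> (real \<times> real) \<Rightarrow> real \<Rightarrow> bool \<Rightarrow> real" where
  "param_rule z r a = mix_rule a (if a then snd z else fst z) r"

lemma group_stats_cong:
  assumes "\<And>\<omega>. \<omega> \<in> group a \<Longrightarrow> \<pi> \<omega> = \<pi>' \<omega>"
  shows "group_stats a \<pi> = group_stats a \<pi>'"
proof -
  have "(\<lambda>\<omega>. \<pi> \<omega> * indicator (group a) \<omega>) = (\<lambda>\<omega>. \<pi>' \<omega> * indicator (group a) \<omega>)"
    using assms by (auto simp: fun_eq_iff indicator_def)
  then show ?thesis
    unfolding group_stats_def pos_def true_pos_def by metis
qed

lemma stats_param_rule:
  assumes "z \<in> param_space"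
  shows "stats (\<lambda>\<omega>. param_rule z (R \<omega>) (A \<omega>)) = stats_of_param z"
proof -
  have "group_stats a (\<lambda>\<omega>. param_rule z (R \<omega>) (A \<omega>)) =
      group_stats a (\<lambda>\<omega>. mix_rule a (if a then snd z else fst z) (R \<omega>))" for a
    by (rule group_stats_cong) (simp add: group_def param_rule_def)
  with assms show ?thesis
    by (cases z) (simp add: stats_def stats_of_param_def param_space_def group_stats_mix_rule)
qed

lemma param_rule_randomized_predictor:
  assumes "z \<in> param_space"
  shows "randomized_predictor borel (param_rule z)"
proof -
  have "mix_rule False (fst z) \<in> borel_measurable borel" "mix_rule True (snd z) \<in> borel_measurable borel"
    using assms by (auto simp: param_space_def intro: mix_rule_measurable)
  then have "(\<lambda>x. if snd x then mix_rule True (snd z) (fst x) else mix_rule False (fst z) (fst x))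
      \<in> borel_measurable (borel \<Otimes>\<^sub>M count_space UNIV)"
    by (intro measurable_If measurable_compose[OF measurable_fst]) (auto intro: pred_count_space_const1)
  moreover have "(\<lambda>(r, a). param_rule z r a) =
      (\<lambda>x. if snd x then mix_rule True (snd z) (fst x) else mix_rule False (fst z) (fst x))"
    by (auto simp: fun_eq_iff param_rule_def)
  ultimately have "(\<lambda>(r, a). param_rule z r a) \<in> borel_measurable (borel \<Otimes>\<^sub>M count_space UNIV)"
    by simp
  moreover have "0 \<le> param_rule z r a \<and> param_rule z r a \<le> 1" for r a
    using assms mix_rule_bounds by (auto simp: param_space_def param_rule_def)
  ultimately show ?thesis by (simp add: randomized_predictor_def)
qed

lemma derived_predictor_in_predictors:
  assumes "randomized_predictor borel q"
  shows "(\<lambda>\<omega>. q (R \<omega>) (A \<omega>)) \<in> predictors"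
proof -
  have "(\<lambda>(r, a). q r a) \<in> borel_measurable (borel \<Otimes>\<^sub>M count_space UNIV)"
    using assms by (simp add: randomized_predictor_def)
  then have "(\<lambda>\<omega>. (\<lambda>(r, a). q r a) (R \<omega>, A \<omega>)) \<in> borel_measurable F"
    by measurable
  then show ?thesis using assms by (simp add: predictors_def randomized_predictor_def)
qed

lemma predictor_of_features_in_predictors:
  assumes "randomized_predictor MX p"
  shows "(\<lambda>\<omega>. p (X \<omega>) (A \<omega>)) \<in> predictors"
proof -
  have "(\<lambda>(x, a). p x a) \<in> borel_measurable (MX \<Otimes>\<^sub>M count_space UNIV)"
    using assms by (simp add: randomized_predictor_def)
  then have "(\<lambda>\<omega>. (\<lambda>(x, a). p x a) (X \<omega>, A \<omega>)) \<in> borel_measurable F"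
    by (rule measurable_compose[OF XA_measurable_F])
  then show ?thesis using assms by (simp add: predictors_def randomized_predictor_def)
qed

lemma stats_in_param_image: "\<pi> \<in> predictors \<Longrightarrow> stats \<pi> \<in> stats_of_param ` param_space"
  using group_stats_in_param_image[of \<pi> False] group_stats_in_param_image[of \<pi> True]
  by (force simp: stats_def stats_of_param_def param_space_def)

lemma continuous_on_stats_of_param: "continuous_on param_space stats_of_param"
  unfolding stats_of_param_def param_space_def
  by (intro continuous_intros continuous_on_compose2[OF continuous_on_param_stats]) auto

lemma compact_param_space: "compact param_space"
  unfolding param_space_def by (intro compact_Times compact_param_box)

definition loss_of_stats :: "(bool \<Rightarrow> bool \<Rightarrow> real) \<Rightarrow> (real \<times> real) \<times> (real \<times> real) \<Rightarrow> real" where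
  "loss_of_stats l v = (\<integral>\<omega>. l False (Y \<omega>) \<partial>M)
     + (l True False - l False False) * (fst (fst v) + fst (snd v))
     + ((l True True - l False True) - (l True False - l False False)) * (snd (fst v) + snd (snd v))"

lemma continuous_loss_of_stats: "continuous_on UNIV (loss_of_stats l)"
  unfolding loss_of_stats_def by (intro continuous_intros)

lemma expected_loss_eq_loss_of_stats:
  assumes \<pi>: "\<pi> \<in> predictors"
  shows "expected_loss M \<pi> l Y = loss_of_stats l (stats \<pi>)"
proof -
  define c where "c = l True False - l False False"
  define d where "d = (l True True - l False True) - (l True False - l False False)"
  define g where "g a \<omega> = \<pi> \<omega> * indicator (group a) \<omega>" for a \<omega>
  have [measurable]: "\<pi> \<in> borel_measurable M" using predictorsD[OF \<pi>] by simp
  have [measurable]: "g a \<in> borel_measurable M" for a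
    unfolding g_def by measurable
  have g_bounded: "\<bar>g a \<omega>\<bar> \<le> 1" for a \<omega>
    using predictorsD[OF \<pi>] by (auto simp: g_def indicator_def)
  have "integrable M (g a)" "integrable M (\<lambda>\<omega>. g a \<omega> * Y_ind \<omega>)" for a
    using g_bounded by (auto simp: Y_ind_def intro!: integrable_const_bound[where B = 1])
  moreover have "integrable M (\<lambda>\<omega>. l False (Y \<omega>))"
  proof (intro integrable_const_bound[where B = "\<bar>l False True\<bar> + \<bar>l False False\<bar>"] AE_I2)
    show "norm (l False (Y \<omega>)) \<le> \<bar>l False True\<bar> + \<bar>l False False\<bar>" for \<omega>
      by (cases "Y \<omega>") auto
  qed measurable
  moreover have "\<pi> \<omega> * l True (Y \<omega>) + (1 - \<pi> \<omega>) * l False (Y \<omega>) = l False (Y \<omega>)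
      + c * g False \<omega> + c * g True \<omega> + d * (g False \<omega> * Y_ind \<omega>) + d * (g True \<omega> * Y_ind \<omega>)"
    if "\<omega> \<in> space M" for \<omega>
    by (cases "A \<omega>"; cases "Y \<omega>") (simp_all add: g_def group_def Y_ind_def c_def d_def that algebra_simps)
  ultimately have "expected_loss M \<pi> l Y = (\<integral>\<omega>. l False (Y \<omega>) \<partial>M)
      + c * (\<integral>\<omega>. g False \<omega> \<partial>M) + c * (\<integral>\<omega>. g True \<omega> \<partial>M)
      + d * (\<integral>\<omega>. g False \<omega> * Y_ind \<omega> \<partial>M) + d * (\<integral>\<omega>. g True \<omega> * Y_ind \<omega> \<partial>M)"
    unfolding expected_loss_def by (simp cong: Bochner_Integration.integral_cong)
  also have "\<dots> = loss_of_stats l (stats \<pi>)"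
    unfolding loss_of_stats_def stats_def group_stats_def true_pos_eq_Y[OF \<pi>] pos_def g_def c_def d_def
    by (simp add: algebra_simps)
  finally show ?thesis .
qed

fun joint_stat :: "bool \<Rightarrow> real \<times> real \<Rightarrow> real" where
  "joint_stat True v = snd v"
| "joint_stat False v = fst v - snd v"

lemma continuous_on_joint_stat[continuous_intros]:
  "continuous_on S f \<Longrightarrow> continuous_on S (\<lambda>x. joint_stat y (f x))"
  by (cases y) (auto intro!: continuous_intros)

lemma pred_joint_eq_joint_stat:
  assumes \<pi>: "\<pi> \<in> predictors"
  shows "pred_joint M \<pi> (\<lambda>\<omega>. A \<omega> = a \<and> Y \<omega> = y) = joint_stat y (group_stats a \<pi>)"
proof -
  have [measurable]: "\<pi> \<in> borel_measurable M" using predictorsD[OF \<pi>] by simp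
  have "integrable M (\<lambda>\<omega>. \<pi> \<omega> * indicator (group a) \<omega> * Y_ind \<omega>)"
    using predictorsD[OF \<pi>]
    by (intro integrable_const_bound[where B = 1]) (auto simp: Y_ind_def indicator_def)
  moreover have "(\<lambda>\<omega>. \<pi> \<omega> * indicator {\<omega>\<in>space M. A \<omega> = a \<and> Y \<omega> = y} \<omega>) =
      (\<lambda>\<omega>. if y then \<pi> \<omega> * indicator (group a) \<omega> * Y_ind \<omega>
       else \<pi> \<omega> * indicator (group a) \<omega> - \<pi> \<omega> * indicator (group a) \<omega> * Y_ind \<omega>)"
    by (auto simp: fun_eq_iff indicator_def group_def Y_ind_def)
  ultimately show ?thesis
    using integrable_pos_true_pos(1)[OF \<pi>, of a]
    unfolding pred_joint_def group_stats_def pos_def true_pos_eq_Y[OF \<pi>]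
    by (cases y) simp_all
qed

lemma loss_attains_min_on_feasible_params:
  assumes "closed C" "z\<^sub>0 \<in> param_space" "stats_of_param z\<^sub>0 \<in> C"
  obtains z where "z \<in> param_space" "stats_of_param z \<in> C"
    "\<And>z'. z' \<in> param_space \<Longrightarrow> stats_of_param z' \<in> C \<Longrightarrow>
      loss_of_stats l (stats_of_param z) \<le> loss_of_stats l (stats_of_param z')"
proof -
  define K where "K = param_space \<inter> stats_of_param -` C"
  have "closed K"
    unfolding K_def
    by (intro continuous_closed_preimage continuous_on_stats_of_param
        compact_imp_closed[OF compact_param_space] assms(1))
  then have "compact K"
    using compact_Int_closed[OF compact_param_space, of K] by (simp add: K_def Int_absorb1)
  moreover have "K \<noteq> {}"
    using assms(2,3) by (auto simp: K_def)
  moreover have "continuous_on K (\<lambda>z. loss_of_stats l (stats_of_param z))"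
    by (intro continuous_on_compose2[OF continuous_loss_of_stats]
        continuous_on_subset[OF continuous_on_stats_of_param]) (auto simp: K_def)
  ultimately obtain z where z: "z \<in> K"
    and z_min: "\<And>z'. z' \<in> K \<Longrightarrow> loss_of_stats l (stats_of_param z) \<le> loss_of_stats l (stats_of_param z')"
    using continuous_attains_inf by metis
  show thesis
    by (rule that[of z]) (use z z_min in \<open>simp_all add: K_def\<close>)
qed

lemma optimal_derived_predictor_exists:
  assumes "closed C"
    and constraint: "\<And>\<pi>. \<pi> \<in> predictors \<Longrightarrow> P \<pi> \<longleftrightarrow> stats \<pi> \<in> C"
    and "P (\<lambda>_. 0)"
  shows "\<exists>q. randomized_predictor borel q \<and> P (\<lambda>\<omega>. q (R \<omega>) (A \<omega>))
     \<and> (\<forall>p. randomized_predictor MX p \<and> P (\<lambda>\<omega>. p (X \<omega>) (A \<omega>))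
        \<longrightarrow> expected_loss M (\<lambda>\<omega>. q (R \<omega>) (A \<omega>)) l Y \<le> expected_loss M (\<lambda>\<omega>. p (X \<omega>) (A \<omega>)) l Y)"
proof -
  have feasible: "\<exists>z\<in>param_space. stats_of_param z \<in> C \<and> stats_of_param z = stats \<pi>"
    if "\<pi> \<in> predictors" "P \<pi>" for \<pi>
    using stats_in_param_image[OF that(1)] constraint[OF that(1)] that(2) by force
  obtain z where z: "z \<in> param_space" "stats_of_param z \<in> C" and z_min: "\<And>z'. z' \<in> param_space \<Longrightarrow>
      stats_of_param z' \<in> C \<Longrightarrow> loss_of_stats l (stats_of_param z) \<le> loss_of_stats l (stats_of_param z')"
    using feasible[OF const_in_predictors \<open>P (\<lambda>_. 0)\<close>] loss_attains_min_on_feasible_params[OF \<open>closed C\<close>]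
    by (metis order.refl zero_le_one)
  define q where "q = param_rule z"
  have q: "randomized_predictor borel q" "(\<lambda>\<omega>. q (R \<omega>) (A \<omega>)) \<in> predictors"
    "stats (\<lambda>\<omega>. q (R \<omega>) (A \<omega>)) = stats_of_param z"
    unfolding q_def using param_rule_randomized_predictor[OF z(1)] stats_param_rule[OF z(1)]
    by (auto intro: derived_predictor_in_predictors)
  show ?thesis
  proof (intro exI[of _ q] conjI allI impI)
    show "P (\<lambda>\<omega>. q (R \<omega>) (A \<omega>))"
      using constraint[OF q(2)] q(3) z(2) by simp
    fix p assume p: "randomized_predictor MX p \<and> P (\<lambda>\<omega>. p (X \<omega>) (A \<omega>))"
    then have p_pred: "(\<lambda>\<omega>. p (X \<omega>) (A \<omega>)) \<in> predictors"
      by (intro predictor_of_features_in_predictors) simp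
    with feasible p obtain z' where "z' \<in> param_space" "stats_of_param z' \<in> C"
      "stats_of_param z' = stats (\<lambda>\<omega>. p (X \<omega>) (A \<omega>))"
      by blast
    then show "expected_loss M (\<lambda>\<omega>. q (R \<omega>) (A \<omega>)) l Y \<le> expected_loss M (\<lambda>\<omega>. p (X \<omega>) (A \<omega>)) l Y"
      using z_min expected_loss_eq_loss_of_stats[OF q(2)] expected_loss_eq_loss_of_stats[OF p_pred] q(3)
      by metis
  qed (rule q(1))
qed

lemma equalized_odds_iff_stats:
  "\<pi> \<in> predictors \<Longrightarrow> equalized_odds M \<pi> A Y \<longleftrightarrow>
    stats \<pi> \<in> {v. \<forall>y. joint_stat y (fst v) * measure M {\<omega>\<in>space M. A \<omega> = True \<and> Y \<omega> = y}
                    = joint_stat y (snd v) * measure M {\<omega>\<in>space M. A \<omega> = False \<and> Y \<omega> = y}}"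
  unfolding equalized_odds_def by (subst (1 2) pred_joint_eq_joint_stat) (simp_all add: stats_def)

lemma equal_opportunity_iff_stats:
  "\<pi> \<in> predictors \<Longrightarrow> equal_opportunity M \<pi> A Y \<longleftrightarrow>
    stats \<pi> \<in> {v. joint_stat True (fst v) * measure M {\<omega>\<in>space M. A \<omega> = True \<and> Y \<omega> = True}
                 = joint_stat True (snd v) * measure M {\<omega>\<in>space M. A \<omega> = False \<and> Y \<omega> = True}}"
  unfolding equal_opportunity_def by (subst (1 2) pred_joint_eq_joint_stat) (simp_all add: stats_def)

lemma optimal_equalized_odds_derived_predictor:
  "\<exists>q. randomized_predictor borel q \<and> equalized_odds M (\<lambda>\<omega>. q (R \<omega>) (A \<omega>)) A Y
     \<and> (\<forall>p. randomized_predictor MX p \<and> equalized_odds M (\<lambda>\<omega>. p (X \<omega>) (A \<omega>)) A Y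
        \<longrightarrow> expected_loss M (\<lambda>\<omega>. q (R \<omega>) (A \<omega>)) l Y \<le> expected_loss M (\<lambda>\<omega>. p (X \<omega>) (A \<omega>)) l Y)"
  by (rule optimal_derived_predictor_exists[OF _ equalized_odds_iff_stats])
    (auto intro!: closed_Collect_all closed_Collect_eq continuous_intros
      simp: equalized_odds_def pred_joint_def)

lemma optimal_equal_opportunity_derived_predictor:
  "\<exists>q. randomized_predictor borel q \<and> equal_opportunity M (\<lambda>\<omega>. q (R \<omega>) (A \<omega>)) A Y
     \<and> (\<forall>p. randomized_predictor MX p \<and> equal_opportunity M (\<lambda>\<omega>. p (X \<omega>) (A \<omega>)) A Y
        \<longrightarrow> expected_loss M (\<lambda>\<omega>. q (R \<omega>) (A \<omega>)) l Y \<le> expected_loss M (\<lambda>\<omega>. p (X \<omega>) (A \<omega>)) l Y)"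
  by (rule optimal_derived_predictor_exists[OF _ equal_opportunity_iff_stats])
    (auto intro!: closed_Collect_eq continuous_intros simp: equal_opportunity_def pred_joint_def)

end

theorem corollary5p3:
  fixes M :: "'a measure" and MX :: "'x measure"
    and X :: "'a \<Rightarrow> 'x" and Y A :: "'a \<Rightarrow> bool"
    and R :: "'a \<Rightarrow> real" and l :: "bool \<Rightarrow> bool \<Rightarrow> real"
  assumes "prob_space M"
    and "X \<in> measurable M MX"
    and "Y \<in> measurable M (count_space UNIV)"
    and "A \<in> measurable M (count_space UNIV)"
    and "R = real_cond_exp M
               (vimage_algebra (space M) (\<lambda>\<omega>. (X \<omega>, A \<omega>)) (MX \<Otimes>\<^sub>M count_space UNIV))
               (\<lambda>\<omega>. if Y \<omega> then 1 else 0)"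
  shows "(\<exists>q. randomized_predictor borel q
              \<and> equalized_odds M (\<lambda>\<omega>. q (R \<omega>) (A \<omega>)) A Y
              \<and> (\<forall>p. randomized_predictor MX p \<and> equalized_odds M (\<lambda>\<omega>. p (X \<omega>) (A \<omega>)) A Y
                     \<longrightarrow> expected_loss M (\<lambda>\<omega>. q (R \<omega>) (A \<omega>)) l Y
                         \<le> expected_loss M (\<lambda>\<omega>. p (X \<omega>) (A \<omega>)) l Y))
       \<and> (\<exists>q. randomized_predictor borel q
              \<and> equal_opportunity M (\<lambda>\<omega>. q (R \<omega>) (A \<omega>)) A Y
              \<and> (\<forall>p. randomized_predictor MX p \<and> equal_opportunity M (\<lambda>\<omega>. p (X \<omega>) (A \<omega>)) A Y
                     \<longrightarrow> expected_loss M (\<lambda>\<omega>. q (R \<omega>) (A \<omega>)) l Y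
                         \<le> expected_loss M (\<lambda>\<omega>. p (X \<omega>) (A \<omega>)) l Y))"
proof -
  interpret fair_classification M MX X Y A R
    using assms by (simp add: fair_classification_def fair_classification_axioms_def)
  show ?thesis
    using optimal_equalized_odds_derived_predictor optimal_equal_opportunity_derived_predictor by blast
qed

end
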